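(* Assume $\Delta^2=0$, a constant per-stage budget $\Lambda(t)=\Lambda$, $\pi_0<1$ with $\pi_0\ge(1-\pi_0)/|G|$, and the uniformity hypothesis (U). Define $\bar c(1)=\sigma^2/\sigma_0^2$, $e(\pi_0,G)=\sqrt{|G|\pi_0/(1-\pi_0)}-1$, $c_{\mathrm{crit}}=\Lambda/(|\Psi(1)|\,e(\pi_0,G))$, and recursively $$\bar c(t+1)=\begin{cases}\dfrac{\pi_0^{3/2}+|G|^{-1/2}(1-\pi_0)^{3/2}}{\sqrt{\pi_0}+\sqrt{|G|(1-\pi_0)}}\left((1+|G|)\bar c(t)+\dfrac{\Lambda}{|\Psi(1)|}\right), & \bar c(t)<c_{\mathrm{crit}},\\[2mm] \bar c(t)+\dfrac{\pi_0\Lambda}{|\Psi(1)|}, & \bar c(t)\ge c_{\mathrm{crit}}.\end{cases}$$ Then under the semi-omniscient policy, for all $t\ge1$ and all $i\in H(\Psi(t-1))$, $\mathbb E[c_i(t)\mid |\Psi(1)|]\le\bar c(t)$.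
   Context: Model. There are $Q$ cells. At time $1$ each cell independently contains a target with probability $p_0\in(0,1)$; $\Psi(t)$ is the set of target locations at time $t$, the number of targets $|\Psi(1)|\sim\mathrm{Binomial}(Q,p_0)$ is constant in time, and at most one target occupies a cell. Each cell $j$ has a set $G(j)$ of neighbours with $|G(j)|=|G|$ for all $j$; $H(j)=\{j\}\cup G(j)$, and for a set $S$ of cells $G(S)=\bigcup_{j\in S}G(j)$, $H(S)=S\cup G(S)$; neighbourhoods of distinct targets are disjoint so that $|H(\Psi(t))|=(1+|G|)|\Psi(1)|$. Between stages each target independently stays in its cell with probability $\pi_0$ and otherwise moves to a uniformly chosen neighbour. Amplitudes: initial $\mathcal N(\mu_0,\sigma_0^2)$, random walk with $\mathcal N(0,\Delta^2)$ increments. At stage $t$ efforts $\lambda_i(t)\ge0$, $\sum_i\lambda_i(t)\le\Lambda(t)$, give observations $y_i(t)=\sqrt{\lambda_i(t)}I_i(t)\theta_i(t)+n_i(t)$, $n_i(t)$ i.i.d. $\mathcal N(0,\sigma^2)$. Posterior precisions $c_i(t)$ ($=\sigma^2/$posterior variance) start at $c_i(1)=\sigma^2/\sigma_0^2$ and evolve by: for each target $n$ at $s^{(n)}(t)$ and each $i\in H(s^{(n)}(t))$, $1/c_i(t+1)=1/(c_{s^{(n)}(t)}(t)+\lambda_{s^{(n)}(t)}(t))+\Delta^2/\sigma^2$ (so for $\Delta^2=0$, $c_i(t+1)=c_{s^{(n)}(t)}(t)+\lambda_{s^{(n)}(t)}(t)$). Semi-omniscient policy: at stage $t$ it knows $\Psi(t-1)$,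 so $p_i(t)=\pi_0$ for $i\in\Psi(t-1)$, $p_i(t)=(1-\pi_0)/|G|$ for $i\in G(\Psi(t-1))$, $p_i(t)=0$ otherwise; it allocates $\lambda^s(t)$ minimizing $\sum_i p_i(t)/(c_i(t)+\lambda_i)$ over $\lambda\ge0$ with $\sum_i\lambda_i=\Lambda(t)$. Hypothesis (U): for every $t>1$ the posterior precisions used to compute the allocation are uniform on $H(\Psi(t-1))$ and equal to the bounding sequence, $c_i(t)=\bar c(t)$ for $i\in H(\Psi(t-1))$ (used to determine which cells receive nonzero effort). *)

theory Defs
  imports "HOL-Probability.Probability"
begin

definition nbhd :: "('c \<Rightarrow> 'c set) \<Rightarrow> 'c \<Rightarrow> 'c set" where
  "nbhd G j = insert j (G j)"

definition nbhd_set :: "('c \<Rightarrow> 'c set) \<Rightarrow> 'c set \<Rightarrow> 'c set" where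
  "nbhd_set G S = S \<union> (\<Union>j\<in>S. G j)"

text \<open>Semi-omniscient location probabilities p_i(t), given S = Psi(t-1); g = |G|.\<close>
definition semi_p :: "real \<Rightarrow> nat \<Rightarrow> ('c \<Rightarrow> 'c set) \<Rightarrow> 'c set \<Rightarrow> 'c \<Rightarrow> real" where
  "semi_p pi0 g G S i =
     (if i \<in> S then pi0 else if i \<in> (\<Union>j\<in>S. G j) then (1 - pi0) / real g else 0)"

definition alloc_obj :: "('c::finite \<Rightarrow> real) \<Rightarrow> ('c \<Rightarrow> real) \<Rightarrow> ('c \<Rightarrow> real) \<Rightarrow> real" where
  "alloc_obj p c l = (\<Sum>i\<in>UNIV. p i / (c i + l i))"

definition feasible_alloc :: "real \<Rightarrow> ('c::finite \<Rightarrow> real) \<Rightarrow> bool" where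
  "feasible_alloc Lambda l \<longleftrightarrow> (\<forall>i. 0 \<le> l i) \<and> (\<Sum>i\<in>UNIV. l i) = Lambda"

definition e_fac :: "real \<Rightarrow> nat \<Rightarrow> real" where
  "e_fac pi0 g = sqrt (real g * pi0 / (1 - pi0)) - 1"

definition c_crit :: "real \<Rightarrow> nat \<Rightarrow> real \<Rightarrow> nat \<Rightarrow> real" where
  "c_crit Lambda N pi0 g = Lambda / (real N * e_fac pi0 g)"

definition cbar_step :: "real \<Rightarrow> nat \<Rightarrow> real \<Rightarrow> nat \<Rightarrow> real \<Rightarrow> real" where
  "cbar_step pi0 g Lambda N c =
     (if c < c_crit Lambda N pi0 g then
        (pi0 powr (3/2) + (1 / sqrt (real g)) * (1 - pi0) powr (3/2))
          / (sqrt pi0 + sqrt (real g * (1 - pi0)))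
          * ((1 + real g) * c + Lambda / real N)
      else c + pi0 * Lambda / real N)"

text \<open>Bounding sequence: cbar(1) = c1 (= sigma^2/sigma0^2); index 0 is an unused junk value.\<close>
fun cbar :: "real \<Rightarrow> real \<Rightarrow> nat \<Rightarrow> real \<Rightarrow> nat \<Rightarrow> nat \<Rightarrow> real" where
  "cbar c1 pi0 g Lambda N 0 = c1"
| "cbar c1 pi0 g Lambda N (Suc 0) = c1"
| "cbar c1 pi0 g Lambda N (Suc (Suc t)) = cbar_step pi0 g Lambda N (cbar c1 pi0 g Lambda N (Suc t))"

definition cond_exp_event :: "'w measure \<Rightarrow> 'w set \<Rightarrow> ('w \<Rightarrow> real) \<Rightarrow> real" where
  "cond_exp_event M A X = (\<integral>\<omega>. indicator A \<omega> * X \<omega> \<partial>M) / measure M A"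

end

theory Submission
  imports Defs
begin

(* With Delta = 0 the precision of every cell of H(s_n(t)) after stage t is the precision of
   the target's cell plus the effort placed there, so along the path of target n
   c(t+1) = c(1) + sum_{u=1..t} lam_u(s_n(u)).  Under (U) the allocation problem of stage u is
   the separable convex programme  min sum_i p_i/(C + x_i)  with a uniform precision
   C = cbar(u) on H(Psi(u-1)).  Its minimiser is unique on the support of p and explicit
   (KKT): effort a on every cell of Psi(u-1) and b on every neighbour, with C + a = r (C + b),
   r = sqrt(|G| pi0/(1-pi0)) = 1 + e(pi0,G), or all effort on Psi(u-1) once C >= c_crit.
   The target stays put with probability pi0 independently of the past, so the expected
   effort on its cell is pi0 a + (1 - pi0) b, which equals cbar(u+1) - cbar(u).  Telescoping
   gives E[c_i(t) | |Psi(1)| = k] = cbar(t): the bound of the theorem holds with equality. *)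


section \<open>KKT points of the allocation objective are unique minimisers\<close>

lemma reciprocal_kkt_gap:
  fixes p K x y mu :: real
  assumes p: "0 < p" and K: "0 < K" and x: "0 \<le> x" and y: "0 \<le> y"
    and kkt_le: "p / (K + y)^2 \<le> mu" and kkt_eq: "0 < y \<Longrightarrow> p / (K + y)^2 = mu"
  shows "p / (K + x) - p / (K + y) + mu * (x - y) \<ge> p * (x - y)^2 / ((K + x) * (K + y)^2)"
proof -
  have "mu * (x - y) \<ge> p / (K + y)^2 * (x - y)"
  proof (cases "0 < y")
    case True thus ?thesis using kkt_eq by simp
  next
    case False
    hence "y = 0" using y by simp
    have "p / (K + y)^2 * x \<le> mu * x" using kkt_le x by (rule mult_right_mono)
    thus ?thesis using \<open>y = 0\<close> by simp
  qed
  moreover have "p / (K + x) - p / (K + y) + p / (K + y)^2 * (x - y)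
      = p * (x - y)^2 / ((K + x) * (K + y)^2)"
  proof -
    have "K + x \<noteq> 0" "K + y \<noteq> 0" using K x y by auto
    thus ?thesis by (simp add: divide_simps) (simp add: power2_eq_square algebra_simps)
  qed
  ultimately show ?thesis by linarith
qed

lemma kkt_point_is_unique_minimiser:
  fixes p cc xs l :: "'c::finite \<Rightarrow> real" and mu Lambda :: real
  assumes p_nonneg: "\<And>i. 0 \<le> p i" and cc_pos: "\<And>i. 0 < p i \<Longrightarrow> 0 < cc i"
    and xs_off: "\<And>i. p i = 0 \<Longrightarrow> xs i = 0" and xs_nonneg: "\<And>i. 0 \<le> xs i"
    and xs_sum: "sum xs UNIV = Lambda" and mu: "0 \<le> mu"
    and kkt_le: "\<And>i. 0 < p i \<Longrightarrow> p i / (cc i + xs i)^2 \<le> mu"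
    and kkt_eq: "\<And>i. 0 < p i \<Longrightarrow> 0 < xs i \<Longrightarrow> p i / (cc i + xs i)^2 = mu"
    and l_min: "is_arg_min (alloc_obj p cc) (feasible_alloc Lambda) l"
    and i: "0 < p i"
  shows "l i = xs i"
proof -
  have not_better: "\<not> alloc_obj p cc xs < alloc_obj p cc l"
    using l_min xs_nonneg xs_sum unfolding is_arg_min_def feasible_alloc_def by auto
  have l_nonneg: "\<And>i. 0 \<le> l i" and l_sum: "sum l UNIV = Lambda"
    using l_min unfolding is_arg_min_def feasible_alloc_def by auto
  define gap where "gap i = (if 0 < p i then p i * (l i - xs i)^2 / ((cc i + l i) * (cc i + xs i)^2) else 0)" for i
  define D where "D i = p i / (cc i + l i) - p i / (cc i + xs i) + mu * (l i - xs i)" for i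
  have D_ge: "gap i \<le> D i" for i
  proof (cases "0 < p i")
    case True
    show ?thesis
      using reciprocal_kkt_gap[OF True cc_pos[OF True] l_nonneg xs_nonneg kkt_le[OF True] kkt_eq[OF True]] True
      unfolding D_def gap_def by simp
  next
    case False
    hence "p i = 0" using p_nonneg[of i] by simp
    thus ?thesis using xs_off[of i] l_nonneg[of i] mu unfolding D_def gap_def by simp
  qed
  have gap_nonneg: "0 \<le> gap i" for i
    using cc_pos[of i] l_nonneg[of i] xs_nonneg[of i] unfolding gap_def
    by (auto intro!: divide_nonneg_pos mult_nonneg_nonneg)
  have "sum D UNIV = alloc_obj p cc l - alloc_obj p cc xs + mu * (sum l UNIV - sum xs UNIV)"
    unfolding D_def alloc_obj_def by (simp add: sum.distrib sum_subtractf sum_distrib_left algebra_simps)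
  also have "\<dots> \<le> 0" using not_better l_sum xs_sum by simp
  finally have "sum gap UNIV \<le> 0" using sum_mono[of UNIV gap D] D_ge by simp
  hence "gap i = 0" using gap_nonneg sum_nonneg_eq_0_iff[of UNIV gap] sum_nonneg[of UNIV gap] by simp
  show "l i = xs i"
  proof (rule ccontr)
    assume "l i \<noteq> xs i"
    hence "0 < gap i" using i cc_pos[OF i] l_nonneg[of i] xs_nonneg[of i] unfolding gap_def
      by (auto intro!: divide_pos_pos mult_pos_pos)
    thus False using \<open>gap i = 0\<close> by simp
  qed
qed

section \<open>The optimal split for uniform precisions\<close>

text \<open>The ratio r = sqrt(|G| pi0/(1-pi0)) = 1 + e(pi0,G) of the precisions C + a (current
  cell) and C + b (a neighbour) at the optimum, when effort goes to both.\<close>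
definition stay_ratio :: "real \<Rightarrow> nat \<Rightarrow> real" where
  "stay_ratio pi0 g = sqrt (real g * pi0 / (1 - pi0))"

text \<open>Effort per neighbour cell (b) and on the cell of the previous target position (a), for a
  per-target budget L and uniform precision C.  Below the critical precision the budget is
  split so that C + a = r (C + b); above it all effort goes to the previous position.\<close>
definition nb_effort :: "real \<Rightarrow> nat \<Rightarrow> real \<Rightarrow> real \<Rightarrow> real" where
  "nb_effort pi0 g L C =
     (if C * (stay_ratio pi0 g - 1) < L then (L + C - stay_ratio pi0 g * C) / (stay_ratio pi0 g + real g)
      else 0)"

definition stay_effort :: "real \<Rightarrow> nat \<Rightarrow> real \<Rightarrow> real \<Rightarrow> real" where
  "stay_effort pi0 g L C =
     (if C * (stay_ratio pi0 g - 1) < L then stay_ratio pi0 g * (C + nb_effort pi0 g L C) - C else L)"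

lemma stay_ratio_props:
  assumes g: "0 < g" and pi0: "pi0 < 1" "(1 - pi0) / real g \<le> pi0"
  shows "0 < pi0" "1 \<le> stay_ratio pi0 g" "pi0 = (stay_ratio pi0 g)^2 * ((1 - pi0) / real g)"
    "e_fac pi0 g = stay_ratio pi0 g - 1"
proof -
  have "0 < (1 - pi0) / real g" using g pi0 by simp
  thus "0 < pi0" using pi0 by linarith
  have "1 \<le> real g * pi0 / (1 - pi0)" using pi0 g by (simp add: field_simps)
  thus "1 \<le> stay_ratio pi0 g" unfolding stay_ratio_def by simp
  have "0 \<le> real g * pi0 / (1 - pi0)" using \<open>0 < pi0\<close> pi0 by simp
  hence "(stay_ratio pi0 g)^2 = real g * pi0 / (1 - pi0)" unfolding stay_ratio_def by simp
  thus "pi0 = (stay_ratio pi0 g)^2 * ((1 - pi0) / real g)" using g pi0 by (simp add: field_simps)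
  show "e_fac pi0 g = stay_ratio pi0 g - 1" unfolding e_fac_def stay_ratio_def ..
qed

lemma effort_split_feasible:
  assumes g: "0 < g" and pi0: "pi0 < 1" "(1 - pi0) / real g \<le> pi0"
    and L: "0 \<le> L" and C: "0 < C"
  shows "0 \<le> stay_effort pi0 g L C" "0 \<le> nb_effort pi0 g L C"
    "stay_effort pi0 g L C + real g * nb_effort pi0 g L C = L"
proof -
  define r where "r = stay_ratio pi0 g"
  have r1: "1 \<le> r" using stay_ratio_props[OF g pi0] unfolding r_def by simp
  show "0 \<le> stay_effort pi0 g L C" "0 \<le> nb_effort pi0 g L C"
    "stay_effort pi0 g L C + real g * nb_effort pi0 g L C = L"
  proof (atomize (full), cases "C * (r - 1) < L")
    case True
    define b where "b = nb_effort pi0 g L C"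
    have b_eq: "b = (L + C - r * C) / (r + real g)" using True unfolding b_def nb_effort_def r_def by simp
    have b_pos: "0 < b" unfolding b_eq using True r1 g by (intro divide_pos_pos) (auto simp: algebra_simps)
    have a_eq: "stay_effort pi0 g L C = r * (C + b) - C" using True unfolding stay_effort_def b_def r_def by simp
    have "C \<le> 1 * (C + b)" using b_pos by simp
    also have "\<dots> \<le> r * (C + b)" using r1 b_pos C by (intro mult_right_mono) auto
    finally have "C \<le> r * (C + b)" .
    moreover have "(r + real g) * b = L + C - r * C" using r1 g unfolding b_eq by simp
    ultimately show "0 \<le> stay_effort pi0 g L C \<and> 0 \<le> nb_effort pi0 g L C \<and>
        stay_effort pi0 g L C + real g * nb_effort pi0 g L C = L"
      using b_pos unfolding a_eq b_def[symmetric] by (simp add: algebra_simps)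
  next
    case False
    thus "0 \<le> stay_effort pi0 g L C \<and> 0 \<le> nb_effort pi0 g L C \<and>
        stay_effort pi0 g L C + real g * nb_effort pi0 g L C = L"
      using L unfolding stay_effort_def nb_effort_def r_def by simp
  qed
qed

lemma effort_split_kkt:
  assumes g: "0 < g" and pi0: "pi0 < 1" "(1 - pi0) / real g \<le> pi0"
    and L: "0 \<le> L" and C: "0 < C"
  defines "a \<equiv> stay_effort pi0 g L C" and "b \<equiv> nb_effort pi0 g L C" and "q \<equiv> (1 - pi0) / real g"
  obtains mu where "0 \<le> mu" "pi0 / (C + a)^2 = mu" "q / (C + b)^2 \<le> mu" "0 < b \<Longrightarrow> q / (C + b)^2 = mu"
proof -
  define r where "r = stay_ratio pi0 g"
  have q: "0 < q" using g pi0 unfolding q_def by simp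
  have r1: "1 \<le> r" and pq: "pi0 = r^2 * q" using stay_ratio_props[OF g pi0] unfolding r_def q_def by auto
  show thesis
  proof (cases "C * (r - 1) < L")
    case True
    have "C + a = r * (C + b)" using True unfolding a_def b_def stay_effort_def r_def by simp
    hence "pi0 / (C + a)^2 = q / (C + b)^2" unfolding pq using r1 by (simp add: power_mult_distrib)
    thus thesis using q by (intro that[of "q / (C + b)^2"]) auto
  next
    case False
    have ab: "a = L" "b = 0" using False unfolding a_def b_def stay_effort_def nb_effort_def r_def by auto
    have "C + L \<le> r * C" using False by (simp add: algebra_simps)
    hence "(C + L)^2 \<le> (r * C)^2" using C L by (intro power_mono) auto
    hence "q * (C + L)^2 \<le> pi0 * C^2" unfolding pq using q by (simp add: power_mult_distrib algebra_simps)
    hence "q / C^2 \<le> pi0 / (C + L)^2" using C L by (simp add: divide_simps)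
    thus thesis using ab pi0 stay_ratio_props(1)[OF g pi0] by (intro that[of "pi0 / (C + L)^2"]) auto
  qed
qed

lemma disjoint_nbhds:
  fixes G :: "'c::finite \<Rightarrow> 'c set" and S :: "'c set"
  assumes G_card: "\<And>j. card (G j) = g" and G_irrefl: "\<And>j. j \<notin> G j"
    and disj: "\<And>j j'. j \<in> S \<Longrightarrow> j' \<in> S \<Longrightarrow> j \<noteq> j' \<Longrightarrow> nbhd G j \<inter> nbhd G j' = {}"
  shows "S \<inter> (\<Union>j\<in>S. G j) = {}" "card (\<Union>j\<in>S. G j) = card S * g"
proof -
  show "S \<inter> (\<Union>j\<in>S. G j) = {}"
  proof (rule ccontr)
    assume "S \<inter> (\<Union>j\<in>S. G j) \<noteq> {}"
    then obtain x j where "x \<in> S" "j \<in> S" "x \<in> G j" by auto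
    moreover have "x \<noteq> j" using \<open>x \<in> G j\<close> G_irrefl by auto
    ultimately show False using disj[of x j] unfolding nbhd_def by auto
  qed
  have "card (\<Union>j\<in>S. G j) = (\<Sum>j\<in>S. card (G j))"
  proof (rule card_UN_disjoint)
    show "\<forall>i\<in>S. \<forall>j\<in>S. i \<noteq> j \<longrightarrow> G i \<inter> G j = {}" using disj unfolding nbhd_def by blast
  qed auto
  thus "card (\<Union>j\<in>S. G j) = card S * g" using G_card by simp
qed

lemma piecewise_alloc_total:
  fixes S U :: "'c::finite set"
  assumes SU: "S \<inter> U = {}"
  shows "(\<Sum>i\<in>UNIV. if i \<in> S then a else if i \<in> U then b else 0) = real (card S) * a + real (card U) * b"
proof -
  let ?x = "\<lambda>i. if i \<in> S then a else if i \<in> U then b else (0::real)"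
  have "sum ?x UNIV = sum ?x (S \<union> U) + sum ?x (- (S \<union> U))"
    by (subst sum.union_disjoint[symmetric]) (auto intro: sum.cong)
  also have "sum ?x (- (S \<union> U)) = 0" by (intro sum.neutral) auto
  also have "sum ?x (S \<union> U) = sum ?x S + sum ?x U" using SU by (intro sum.union_disjoint) auto
  also have "sum ?x U = card U * b" using SU by (subst sum.cong[where B=U and h="\<lambda>_. b"]) auto
  finally show ?thesis by simp
qed

lemma semi_alloc_uniform:
  fixes G :: "'c::finite \<Rightarrow> 'c set" and S :: "'c set" and cc l :: "'c \<Rightarrow> real"
  assumes G_card: "\<And>j. card (G j) = g" and g: "0 < g" and G_irrefl: "\<And>j. j \<notin> G j"
    and disj: "\<And>j j'. j \<in> S \<Longrightarrow> j' \<in> S \<Longrightarrow> j \<noteq> j' \<Longrightarrow> nbhd G j \<inter> nbhd G j' = {}"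
    and pi0: "pi0 < 1" "(1 - pi0) / real g \<le> pi0" and Lambda: "0 \<le> Lambda" and S: "S \<noteq> {}"
    and C: "0 < C" and cc: "\<And>i. i \<in> nbhd_set G S \<Longrightarrow> cc i = C"
    and l_min: "is_arg_min (alloc_obj (semi_p pi0 g G S) cc) (feasible_alloc Lambda) l"
  shows "\<And>j. j \<in> S \<Longrightarrow> l j = stay_effort pi0 g (Lambda / card S) C"
    and "\<And>j. j \<in> (\<Union>j\<in>S. G j) \<Longrightarrow> l j = nb_effort pi0 g (Lambda / card S) C"
proof -
  define q where "q = (1 - pi0) / real g"
  define L where "L = Lambda / card S"
  define a where "a = stay_effort pi0 g L C"
  define b where "b = nb_effort pi0 g L C"
  define U where "U = (\<Union>j\<in>S. G j)"
  have q: "0 < q" using g pi0 unfolding q_def by simp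
  have pi0_pos: "0 < pi0" using stay_ratio_props(1)[OF g pi0] .
  have card_S: "0 < card S" using S by (simp add: card_gt_0_iff)
  have L: "0 \<le> L" using Lambda card_S unfolding L_def by simp
  have a: "0 \<le> a" and b: "0 \<le> b" and ab_sum: "a + real g * b = L"
    using effort_split_feasible[OF g pi0 L C] unfolding a_def b_def by auto
  obtain mu where mu: "0 \<le> mu" "pi0 / (C + a)^2 = mu" "q / (C + b)^2 \<le> mu" "0 < b \<Longrightarrow> q / (C + b)^2 = mu"
    using effort_split_kkt[OF g pi0 L C] unfolding a_def b_def q_def by blast
  have SU: "S \<inter> U = {}" and card_U: "card U = card S * g"
    using disjoint_nbhds[OF G_card G_irrefl disj] unfolding U_def by auto
  have p_eq: "semi_p pi0 g G S i = (if i \<in> S then pi0 else if i \<in> U then q else 0)" for i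
    unfolding semi_p_def U_def q_def by simp
  have H_eq: "nbhd_set G S = S \<union> U" unfolding nbhd_set_def U_def by simp
  define xs where "xs i = (if i \<in> S then a else if i \<in> U then b else 0)" for i
  have "sum xs UNIV = card S * (a + real g * b)"
    using piecewise_alloc_total[OF SU, of a b] unfolding xs_def card_U by (simp add: algebra_simps)
  hence xs_sum: "sum xs UNIV = Lambda" unfolding ab_sum L_def using card_S S by simp
  have l_eq: "l i = xs i" if "0 < semi_p pi0 g G S i" for i
  proof (rule kkt_point_is_unique_minimiser[OF _ _ _ _ xs_sum mu(1) _ _ l_min that])
    fix i
    show "0 \<le> semi_p pi0 g G S i" unfolding p_eq using q pi0_pos by simp
    show "0 < semi_p pi0 g G S i \<Longrightarrow> 0 < cc i" using cc[of i] C unfolding p_eq H_eq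
      by (auto split: if_splits)
    show "semi_p pi0 g G S i = 0 \<Longrightarrow> xs i = 0" unfolding p_eq xs_def using q pi0_pos by (auto split: if_splits)
    show "0 \<le> xs i" unfolding xs_def using a b by simp
    show "0 < semi_p pi0 g G S i \<Longrightarrow> semi_p pi0 g G S i / (cc i + xs i)^2 \<le> mu"
      using mu cc[of i] unfolding p_eq H_eq xs_def by (auto split: if_splits)
    show "0 < semi_p pi0 g G S i \<Longrightarrow> 0 < xs i \<Longrightarrow> semi_p pi0 g G S i / (cc i + xs i)^2 = mu"
      using mu cc[of i] unfolding p_eq H_eq xs_def by (auto split: if_splits)
  qed
  show "l j = stay_effort pi0 g (Lambda / card S) C" if "j \<in> S" for j
    using l_eq[of j] that pi0_pos unfolding p_eq xs_def a_def L_def by simp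
  show "l j = nb_effort pi0 g (Lambda / card S) C" if "j \<in> (\<Union>j\<in>S. G j)" for j
  proof -
    have "j \<in> U" "j \<notin> S" using that SU unfolding U_def by auto
    thus ?thesis using l_eq[of j] q unfolding p_eq xs_def b_def L_def by simp
  qed
qed

text \<open>An identity of square roots behind the closed form of \<open>cbar_step\<close>: with
  P = sqrt pi0, Q = sqrt (1-pi0), s = sqrt |G| and r = s P / Q.\<close>
lemma sqrt_ratio_identity:
  fixes P Q s :: real
  assumes "0 < P" "0 < Q" "0 < s"
  shows "(P^2 * (s * P / Q) + Q^2) / (s * P / Q + s^2) = (P^3 + 1 / s * Q^3) / (P + s * Q)"
proof -
  have num: "P^2 * (s * P / Q) + Q^2 = (s * P^3 + Q^3) / Q"
    using assms by (simp add: field_simps power2_eq_square power3_eq_cube)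
  have den: "s * P / Q + s^2 = s * (P + s * Q) / Q" using assms by (simp add: field_simps power2_eq_square)
  have rhs: "P^3 + 1 / s * Q^3 = (s * P^3 + Q^3) / s" using assms by (simp add: field_simps)
  have "0 < P + s * Q" using assms by (intro add_pos_pos mult_pos_pos)
  thus ?thesis unfolding num den rhs using assms by (simp add: divide_simps)
qed

lemma powr_three_halves: "0 \<le> x \<Longrightarrow> x powr (3/2) = sqrt x ^ 3"
proof -
  assume x: "0 \<le> x"
  have "x powr (3/2) = x powr 1 * x powr (1/2)" using powr_add[of x 1 "1/2"] by simp
  also have "\<dots> = sqrt x ^ 2 * sqrt x" using x by (cases "x = 0") (simp_all add: powr_half_sqrt)
  finally show ?thesis by (simp add: power3_eq_cube power2_eq_square)
qed

lemma cbar_step_factor: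
  assumes g: "0 < g" and pi0: "0 < pi0" "pi0 < 1"
  shows "(pi0 * stay_ratio pi0 g + 1 - pi0) / (stay_ratio pi0 g + real g) =
     (pi0 powr (3/2) + (1 / sqrt (real g)) * (1 - pi0) powr (3/2)) / (sqrt pi0 + sqrt (real g * (1 - pi0)))"
proof -
  define P where "P = sqrt pi0"
  define Q where "Q = sqrt (1 - pi0)"
  define s where "s = sqrt (real g)"
  have PQs: "0 < P" "0 < Q" "0 < s" unfolding P_def Q_def s_def using pi0 g by auto
  have "pi0 = P^2" "1 - pi0 = Q^2" "real g = s^2" unfolding P_def Q_def s_def using pi0 by simp_all
  moreover have "stay_ratio pi0 g = s * P / Q" unfolding stay_ratio_def P_def Q_def s_def
    by (simp add: real_sqrt_mult real_sqrt_divide)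
  ultimately have "(pi0 * stay_ratio pi0 g + 1 - pi0) / (stay_ratio pi0 g + real g)
      = (P^2 * (s * P / Q) + Q^2) / (s * P / Q + s^2)" by (simp add: algebra_simps)
  also have "\<dots> = (P^3 + 1 / s * Q^3) / (P + s * Q)" by (rule sqrt_ratio_identity[OF PQs])
  also have "\<dots> = (pi0 powr (3/2) + (1 / sqrt (real g)) * (1 - pi0) powr (3/2))
      / (sqrt pi0 + sqrt (real g * (1 - pi0)))"
    unfolding P_def Q_def s_def using pi0 by (simp add: powr_three_halves real_sqrt_mult)
  finally show ?thesis .
qed

lemma below_c_crit_iff:
  assumes g: "0 < g" and pi0: "pi0 < 1" "(1 - pi0) / real g \<le> pi0" and N: "0 < N" and C: "0 < C"
  shows "C < c_crit Lambda N pi0 g \<longleftrightarrow> 1 < stay_ratio pi0 g \<and> C * (stay_ratio pi0 g - 1) < Lambda / N"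
proof -
  define r where "r = stay_ratio pi0 g"
  have r1: "1 \<le> r" using stay_ratio_props[OF g pi0] unfolding r_def by simp
  have crit: "c_crit Lambda N pi0 g = Lambda / (real N * (r - 1))"
    unfolding c_crit_def stay_ratio_props(4)[OF g pi0] r_def ..
  show ?thesis
  proof (cases "r = 1")
    case True thus ?thesis using C unfolding crit r_def[symmetric] by simp
  next
    case False
    hence "1 < r" using r1 by simp
    thus ?thesis using N unfolding crit r_def[symmetric] by (simp add: field_simps)
  qed
qed

text \<open>Key identity: starting from uniform precision C, the expected precision of the target's
  new cell, C + pi0 a + (1-pi0) b, is exactly \<open>cbar_step C\<close>.  (When r = 1 both branches of
  \<open>cbar_step\<close> agree, which is why the interior split is used there too.)\<close>
lemma expected_gain_eq_cbar_step:
  assumes g: "0 < g" and pi0: "pi0 < 1" "(1 - pi0) / real g \<le> pi0" and Lambda: "0 \<le> Lambda"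
    and N: "0 < N" and C: "0 < C"
  shows "C + pi0 * stay_effort pi0 g (Lambda / N) C + (1 - pi0) * nb_effort pi0 g (Lambda / N) C
         = cbar_step pi0 g Lambda N C"
proof -
  define r where "r = stay_ratio pi0 g"
  define L where "L = Lambda / N"
  have r1: "1 \<le> r" and pq: "pi0 = r^2 * ((1 - pi0) / real g)" and pi0_pos: "0 < pi0"
    using stay_ratio_props[OF g pi0] unfolding r_def by auto
  note below = below_c_crit_iff[OF g pi0 N C, of Lambda, folded r_def L_def]
  show ?thesis
  proof (cases "C * (r - 1) < L")
    case True
    define b where "b = nb_effort pi0 g L C"
    have b_eq: "b = (L + C - r * C) / (r + real g)" using True unfolding b_def nb_effort_def r_def by simp
    have a_eq: "stay_effort pi0 g L C = r * (C + b) - C" using True unfolding stay_effort_def b_def r_def by simp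
    have "0 < r + real g" using r1 by simp
    hence Cb: "C + b = ((1 + real g) * C + L) / (r + real g)" unfolding b_eq by (simp add: field_simps)
    have "C + pi0 * stay_effort pi0 g L C + (1 - pi0) * b = (C + b) * (pi0 * r + 1 - pi0)"
      unfolding a_eq by (simp add: algebra_simps)
    hence lhs: "C + pi0 * stay_effort pi0 g L C + (1 - pi0) * b
        = (pi0 * r + 1 - pi0) / (r + real g) * ((1 + real g) * C + L)"
      unfolding Cb by simp
    show ?thesis
    proof (cases "r = 1")
      case True
      have "pi0 * (1 + real g) = 1" using pq g True by (simp add: field_simps)
      hence "(pi0 * r + 1 - pi0) / (r + real g) * ((1 + real g) * C + L) = C + pi0 * L"
        using True g by (simp add: field_simps)
      thus ?thesis using lhs below True unfolding cbar_step_def L_def b_def by simp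
    next
      case False
      thus ?thesis using lhs below r1 True cbar_step_factor[OF g pi0_pos pi0(1)]
        unfolding cbar_step_def L_def b_def r_def by simp
    qed
  next
    case False
    thus ?thesis using below unfolding cbar_step_def stay_effort_def nb_effort_def r_def L_def by simp
  qed
qed

section \<open>Discrete random variables\<close>

lemma measure_preimage_finite_sum:
  assumes "finite_measure M" "finite F" "\<And>x. x \<in> F \<Longrightarrow> {\<omega>\<in>space M. X \<omega> = x} \<in> sets M"
  shows "measure M {\<omega>\<in>space M. X \<omega> \<in> F} = (\<Sum>x\<in>F. measure M {\<omega>\<in>space M. X \<omega> = x})"
proof -
  interpret finite_measure M by fact
  have "{\<omega>\<in>space M. X \<omega> \<in> F} = (\<Union>x\<in>F. {\<omega>\<in>space M. X \<omega> = x})" by auto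
  also have "measure M \<dots> = (\<Sum>x\<in>F. measure M {\<omega>\<in>space M. X \<omega> = x})"
    using assms by (intro finite_measure_finite_Union) (auto simp: disjoint_family_on_def)
  finally show ?thesis .
qed

lemma measurable_count_space_comp:
  "X \<in> measurable M (count_space UNIV) \<Longrightarrow> (\<lambda>\<omega>. \<phi> (X \<omega>)) \<in> measurable M (count_space UNIV)"
  by (rule measurable_compose[OF _ measurable_count_space])

lemma measurable_count_space_pair:
  fixes X :: "'w \<Rightarrow> 'a::countable" and Y :: "'w \<Rightarrow> 'b::countable"
  assumes "X \<in> measurable M (count_space UNIV)" "Y \<in> measurable M (count_space UNIV)"
  shows "(\<lambda>\<omega>. \<phi> (X \<omega>) (Y \<omega>)) \<in> measurable M (count_space UNIV)"
proof -
  have "(\<lambda>\<omega>. (X \<omega>, Y \<omega>)) \<in> measurable M (count_space UNIV \<Otimes>\<^sub>M count_space UNIV)"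
    using assms by (rule measurable_Pair)
  also have "count_space UNIV \<Otimes>\<^sub>M count_space UNIV = count_space (UNIV :: ('a \<times> 'b) set)"
    by (simp add: pair_measure_countable)
  finally have "(\<lambda>\<omega>. (X \<omega>, Y \<omega>)) \<in> measurable M (count_space UNIV)" .
  from measurable_count_space_comp[OF this, of "\<lambda>(a, b). \<phi> a b"] show ?thesis by simp
qed

lemma measurable_count_space_map:
  fixes f :: "'i \<Rightarrow> 'w \<Rightarrow> 'a::countable"
  assumes "\<And>x. f x \<in> measurable M (count_space UNIV)"
  shows "(\<lambda>\<omega>. map (\<lambda>x. f x \<omega>) xs) \<in> measurable M (count_space UNIV)"
proof (induction xs)
  case Nil thus ?case by simp
next
  case (Cons x xs)
  from measurable_count_space_pair[OF assms[of x] Cons, of "(#)"] show ?case by simp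
qed

lemma sets_count_space_event:
  assumes "X \<in> measurable M (count_space UNIV)" shows "{\<omega>\<in>space M. P (X \<omega>)} \<in> sets M"
proof -
  have "(\<lambda>\<omega>. P (X \<omega>)) -` {True} \<inter> space M \<in> sets M"
    by (rule measurable_sets[OF measurable_count_space_comp[OF assms]]) simp
  moreover have "(\<lambda>\<omega>. P (X \<omega>)) -` {True} \<inter> space M = {\<omega>\<in>space M. P (X \<omega>)}" by auto
  ultimately show ?thesis by simp
qed


section \<open>The search model\<close>

text \<open>The model of the theorem with Delta = 0 already built into the precision update, and
  with a general initial precision c1 > 0.  Psi t = positions of the targets at stage t,
  \<open>mv t\<close> the (random) motion map between stages t and t+1.\<close>
locale search_model =
  fixes M :: "'w measure"
    and G :: "'c::finite \<Rightarrow> 'c set" and g :: nat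
    and pi0 Lambda c1 :: real
    and Ntg :: "'w \<Rightarrow> nat"
    and s :: "nat \<Rightarrow> nat \<Rightarrow> 'w \<Rightarrow> 'c"
    and mv :: "nat \<Rightarrow> 'w \<Rightarrow> 'c \<Rightarrow> 'c"
    and c lam :: "nat \<Rightarrow> 'c \<Rightarrow> 'w \<Rightarrow> real"
    and Psi :: "nat \<Rightarrow> 'w \<Rightarrow> 'c set"
  assumes M: "prob_space M"
    and G_card: "\<And>j. card (G j) = g" and g_pos: "0 < g" and G_irrefl: "\<And>j. j \<notin> G j"
    and c1_pos: "0 < c1"
    and Lambda: "0 \<le> Lambda"
    and pi0: "pi0 < 1" "(1 - pi0) / real g \<le> pi0"
    and Psi_def: "\<And>t \<omega>. Psi t \<omega> = (\<lambda>n. s t n \<omega>) ` {..<Ntg \<omega>}"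
    and disj: "\<And>t \<omega> n n'. n < Ntg \<omega> \<Longrightarrow> n' < Ntg \<omega> \<Longrightarrow> n \<noteq> n' \<Longrightarrow>
                 nbhd G (s t n \<omega>) \<inter> nbhd G (s t n' \<omega>) = {}"
    and move: "\<And>t n \<omega>. s (Suc t) n \<omega> = mv t \<omega> (s t n \<omega>)"
    and meas_N: "Ntg \<in> measurable M (count_space UNIV)"
    and meas_s: "\<And>t n. s t n \<in> measurable M (count_space UNIV)"
    and meas_mv: "\<And>t. mv t \<in> measurable M (count_space UNIV)"
    and meas_c: "\<And>t i. c t i \<in> borel_measurable M"
    and meas_lam: "\<And>t i. lam t i \<in> borel_measurable M"
    and move_stay: "\<And>t j. measure M {\<omega> \<in> space M. mv t \<omega> j = j} = pi0"
    and move_nb: "\<And>t j k. k \<in> G j \<Longrightarrow> measure M {\<omega> \<in> space M. mv t \<omega> j = k} = (1 - pi0) / real g"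
    and move_indep_past: "\<And>t f h. measure M {\<omega> \<in> space M. mv t \<omega> = f \<and>
              (Ntg \<omega>, map (\<lambda>k. map (\<lambda>n. s k n \<omega>) [0..<Ntg \<omega>]) [0..<Suc t]) = h}
          = measure M {\<omega> \<in> space M. mv t \<omega> = f}
            * measure M {\<omega> \<in> space M.
                (Ntg \<omega>, map (\<lambda>k. map (\<lambda>n. s k n \<omega>) [0..<Ntg \<omega>]) [0..<Suc t]) = h}"
    and c_init: "\<And>i \<omega>. c 1 i \<omega> = c1"
    and c_update: "\<And>t n \<omega> i. 1 \<le> t \<Longrightarrow> n < Ntg \<omega> \<Longrightarrow> i \<in> nbhd G (s t n \<omega>) \<Longrightarrow>
            c (Suc t) i \<omega> = c t (s t n \<omega>) \<omega> + lam t (s t n \<omega>) \<omega>"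
    and policy_U: "\<And>t \<omega>. 1 \<le> t \<Longrightarrow>
            is_arg_min
              (alloc_obj (semi_p pi0 g G (Psi (t - 1) \<omega>))
                 (\<lambda>i. if i \<in> nbhd_set G (Psi (t - 1) \<omega>)
                      then cbar c1 pi0 g Lambda (card (Psi 1 \<omega>)) t
                      else c t i \<omega>))
              (feasible_alloc Lambda) (\<lambda>i. lam t i \<omega>)"
begin

interpretation P: prob_space M by (rule M)

abbreviation cb :: "nat \<Rightarrow> nat \<Rightarrow> real" where "cb k t \<equiv> cbar c1 pi0 g Lambda k t"

definition expected_gain :: "nat \<Rightarrow> nat \<Rightarrow> real" where
  "expected_gain k u = pi0 * stay_effort pi0 g (Lambda / real k) (cb k u)
                     + (1 - pi0) * nb_effort pi0 g (Lambda / real k) (cb k u)"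

lemma card_Psi: "card (Psi t \<omega>) = Ntg \<omega>"
proof -
  have "inj_on (\<lambda>n. s t n \<omega>) {..<Ntg \<omega>}"
  proof (rule inj_onI)
    fix n n' assume "n \<in> {..<Ntg \<omega>}" "n' \<in> {..<Ntg \<omega>}" "s t n \<omega> = s t n' \<omega>"
    thus "n = n'" using disj[of n \<omega> n' t] unfolding nbhd_def by auto
  qed
  thus ?thesis unfolding Psi_def by (simp add: card_image)
qed

lemma effort_bounds: "1 \<le> u \<Longrightarrow> 0 \<le> lam u j \<omega> \<and> lam u j \<omega> \<le> Lambda"
proof -
  assume u: "1 \<le> u"
  have "feasible_alloc Lambda (\<lambda>i. lam u i \<omega>)" using policy_U[OF u, of \<omega>] unfolding is_arg_min_def by simp
  hence nonneg: "\<And>i. 0 \<le> lam u i \<omega>" and total: "(\<Sum>i\<in>UNIV. lam u i \<omega>) = Lambda"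
    unfolding feasible_alloc_def by auto
  have "lam u j \<omega> \<le> (\<Sum>i\<in>UNIV. lam u i \<omega>)" using nonneg by (intro member_le_sum) auto
  thus ?thesis using nonneg total by simp
qed

lemma cbar_ge_c1: "0 < k \<Longrightarrow> c1 \<le> cb k t"
proof -
  assume k: "0 < k"
  have "c1 \<le> cb k (Suc t)" for t
  proof (induction t)
    case 0 thus ?case by simp
  next
    case (Suc t)
    have C: "0 < cb k (Suc t)" using Suc c1_pos by linarith
    have L: "0 \<le> Lambda / real k" using Lambda k by simp
    note split = effort_split_feasible[OF g_pos pi0 L C]
    have "0 \<le> pi0 * stay_effort pi0 g (Lambda / real k) (cb k (Suc t))"
      using split stay_ratio_props(1)[OF g_pos pi0] by simp
    moreover have "0 \<le> (1 - pi0) * nb_effort pi0 g (Lambda / real k) (cb k (Suc t))" using split pi0 by simp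
    ultimately show ?case
      using Suc expected_gain_eq_cbar_step[OF g_pos pi0 Lambda k C] by simp
  qed
  thus ?thesis by (cases t) auto
qed

lemma cbar_telescope: "0 < k \<Longrightarrow> cb k (Suc t) = c1 + (\<Sum>u\<in>{1..<Suc t}. expected_gain k u)"
proof (induction t)
  case 0 thus ?case by simp
next
  case (Suc t)
  have C: "0 < cb k (Suc t)" using cbar_ge_c1[OF Suc.prems, of "Suc t"] c1_pos by linarith
  show ?case using Suc expected_gain_eq_cbar_step[OF g_pos pi0 Lambda Suc.prems C]
    unfolding expected_gain_def by simp
qed

lemma AE_moves_local: "AE \<omega> in M. \<forall>u j. mv u \<omega> j \<in> nbhd G j"
proof -
  have prob_one: "measure M {\<omega>\<in>space M. mv u \<omega> j \<in> nbhd G j} = 1" for u j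
  proof -
    have "measure M {\<omega>\<in>space M. mv u \<omega> j \<in> nbhd G j}
        = (\<Sum>x\<in>nbhd G j. measure M {\<omega>\<in>space M. mv u \<omega> j = x})"
      by (rule measure_preimage_finite_sum)
        (auto intro: P.finite_measure_axioms sets_count_space_event[OF meas_mv])
    also have "\<dots> = pi0 + (\<Sum>x\<in>G j. (1 - pi0) / real g)"
      unfolding nbhd_def using G_irrefl[of j] move_stay move_nb by (simp add: sum.insert)
    also have "\<dots> = 1" using G_card[of j] g_pos by simp
    finally show ?thesis .
  qed
  have "AE \<omega> in M. mv u \<omega> j \<in> nbhd G j" for u j
    using P.AE_prob_1[OF prob_one[of u j]] by (rule AE_mp) auto
  thus ?thesis by (simp add: AE_all_countable)
qed

lemma effort_structure:
  assumes u: "1 \<le> u" and k: "Ntg \<omega> = k" "0 < k"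
  shows "\<And>j. j \<in> Psi (u - 1) \<omega> \<Longrightarrow> lam u j \<omega> = stay_effort pi0 g (Lambda / real k) (cb k u)"
    and "\<And>j. j \<in> (\<Union>j\<in>Psi (u - 1) \<omega>. G j) \<Longrightarrow> lam u j \<omega> = nb_effort pi0 g (Lambda / real k) (cb k u)"
proof -
  have card: "card (Psi 1 \<omega>) = k" "card (Psi (u - 1) \<omega>) = k" using card_Psi k by auto
  have l_min: "is_arg_min (alloc_obj (semi_p pi0 g G (Psi (u - 1) \<omega>))
                 (\<lambda>i. if i \<in> nbhd_set G (Psi (u - 1) \<omega>) then cb k u else c u i \<omega>))
              (feasible_alloc Lambda) (\<lambda>i. lam u i \<omega>)"
    using policy_U[OF u, of \<omega>] unfolding card by simp
  have C: "0 < cb k u" using cbar_ge_c1[OF k(2), of u] c1_pos by linarith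
  have S: "Psi (u - 1) \<omega> \<noteq> {}" using card k by auto
  have disj_Psi: "nbhd G j \<inter> nbhd G j' = {}"
    if "j \<in> Psi (u - 1) \<omega>" "j' \<in> Psi (u - 1) \<omega>" "j \<noteq> j'" for j j'
    using that disj[of _ \<omega> _ "u - 1"] unfolding Psi_def by auto
  note alloc = semi_alloc_uniform[OF G_card g_pos G_irrefl disj_Psi pi0 Lambda S C _ l_min]
  show "\<And>j. j \<in> Psi (u - 1) \<omega> \<Longrightarrow> lam u j \<omega> = stay_effort pi0 g (Lambda / real k) (cb k u)"
    and "\<And>j. j \<in> (\<Union>j\<in>Psi (u - 1) \<omega>. G j) \<Longrightarrow> lam u j \<omega> = nb_effort pi0 g (Lambda / real k) (cb k u)"
    using alloc unfolding card by auto
qed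

lemma effort_on_target_cell:
  assumes k: "Ntg \<omega> = k" and n: "n < k" and local: "\<forall>u j. mv u \<omega> j \<in> nbhd G j"
  shows "lam (Suc T) (s (Suc T) n \<omega>) \<omega> =
           (if mv T \<omega> (s T n \<omega>) = s T n \<omega> then stay_effort pi0 g (Lambda / real k) (cb k (Suc T))
            else nb_effort pi0 g (Lambda / real k) (cb k (Suc T)))"
proof -
  note effort = effort_structure[of "Suc T" \<omega> k, simplified, OF k]
  have cell: "s (Suc T) n \<omega> = mv T \<omega> (s T n \<omega>)" by (rule move)
  have prev: "s T n \<omega> \<in> Psi T \<omega>" unfolding Psi_def using k n by auto
  show ?thesis
  proof (cases "mv T \<omega> (s T n \<omega>) = s T n \<omega>")
    case True thus ?thesis using effort(1)[OF _ prev] cell n by simp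
  next
    case False
    hence "mv T \<omega> (s T n \<omega>) \<in> G (s T n \<omega>)" using local unfolding nbhd_def by auto
    hence "s (Suc T) n \<omega> \<in> (\<Union>j\<in>Psi T \<omega>. G j)" using prev cell by auto
    thus ?thesis using effort(2) False n by auto
  qed
qed

lemma precision_along_path:
  assumes k: "Ntg \<omega> = k" and n: "n < k" and local: "\<forall>u j. mv u \<omega> j \<in> nbhd G j"
  shows "i \<in> nbhd G (s t n \<omega>) \<Longrightarrow> c (Suc t) i \<omega> = c1 + (\<Sum>u\<in>{1..<Suc t}. lam u (s u n \<omega>) \<omega>)"
proof (induction t arbitrary: i)
  case 0 thus ?case using c_init by simp
next
  case (Suc t)
  have "s (Suc t) n \<omega> \<in> nbhd G (s t n \<omega>)" using local move by simp
  note IH = Suc.IH[OF this]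
  have "c (Suc (Suc t)) i \<omega> = c (Suc t) (s (Suc t) n \<omega>) \<omega> + lam (Suc t) (s (Suc t) n \<omega>) \<omega>"
    using c_update[of "Suc t" n \<omega> i] Suc.prems k n by simp
  thus ?case unfolding IH by simp
qed

text \<open>The observable past up to stage T: the number of targets and all their positions.
  By hypothesis the motion map of stage T is independent of it.\<close>
definition history :: "nat \<Rightarrow> 'w \<Rightarrow> nat \<times> 'c list list" where
  "history T \<omega> = (Ntg \<omega>, map (\<lambda>k. map (\<lambda>n. s k n \<omega>) [0..<Ntg \<omega>]) [0..<Suc T])"

lemma history_measurable: "history T \<in> measurable M (count_space UNIV)"
proof -
  have "(\<lambda>\<omega>. (m, map (\<lambda>k. map (\<lambda>n. s k n \<omega>) [0..<m]) [0..<Suc T])) \<in> measurable M (count_space UNIV)" for m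
    using measurable_count_space_map[OF measurable_count_space_map[OF meas_s]]
    by (rule measurable_count_space_comp)
  from measurable_compose_countable[OF this meas_N] show ?thesis unfolding history_def[abs_def] .
qed

lemma stay_independent_of_history:
  fixes V :: "(nat \<times> 'c list list) set" and x :: "nat \<times> 'c list list \<Rightarrow> 'c"
  assumes V: "finite V"
  shows "measure M {\<omega>\<in>space M. history T \<omega> \<in> V \<and> mv T \<omega> (x (history T \<omega>)) = x (history T \<omega>)}
         = pi0 * measure M {\<omega>\<in>space M. history T \<omega> \<in> V}"
proof -
  let ?P = "\<lambda>X v. measure M {\<omega>\<in>space M. X \<omega> = v}"
  define W where "W = (SIGMA h:V. {f :: 'c \<Rightarrow> 'c. f (x h) = x h})"
  have W: "finite W" unfolding W_def using V by (intro finite_SigmaI) auto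
  have pair_meas: "(\<lambda>\<omega>. (history T \<omega>, mv T \<omega>)) \<in> measurable M (count_space UNIV)"
    by (rule measurable_count_space_pair[OF history_measurable meas_mv])
  have "measure M {\<omega>\<in>space M. history T \<omega> \<in> V \<and> mv T \<omega> (x (history T \<omega>)) = x (history T \<omega>)}
      = measure M {\<omega>\<in>space M. (history T \<omega>, mv T \<omega>) \<in> W}"
    unfolding W_def by simp
  also have "\<dots> = (\<Sum>z\<in>W. ?P (\<lambda>\<omega>. (history T \<omega>, mv T \<omega>)) z)"
    using measure_preimage_finite_sum[OF P.finite_measure_axioms W] sets_count_space_event[OF pair_meas] by simp
  also have "\<dots> = (\<Sum>(h, f)\<in>W. ?P (mv T) f * ?P (history T) h)"
  proof (rule sum.cong)
    fix z assume "z \<in> W"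
    obtain h f where z: "z = (h, f)" by (cases z)
    have "{\<omega>\<in>space M. (history T \<omega>, mv T \<omega>) = z} = {\<omega>\<in>space M. mv T \<omega> = f \<and> history T \<omega> = h}"
      unfolding z by auto
    thus "?P (\<lambda>\<omega>. (history T \<omega>, mv T \<omega>)) z = (case z of (h, f) \<Rightarrow> ?P (mv T) f * ?P (history T) h)"
      using move_indep_past[of T f h] unfolding z history_def by simp
  qed simp
  also have "\<dots> = (\<Sum>h\<in>V. \<Sum>f\<in>{f. f (x h) = x h}. ?P (mv T) f * ?P (history T) h)"
    unfolding W_def by (rule sum.Sigma[symmetric]) (use V in auto)
  also have "\<dots> = (\<Sum>h\<in>V. pi0 * ?P (history T) h)"
  proof (rule sum.cong)
    fix h
    have "(\<Sum>f\<in>{f. f (x h) = x h}. ?P (mv T) f) = measure M {\<omega>\<in>space M. mv T \<omega> \<in> {f. f (x h) = x h}}"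
      by (rule measure_preimage_finite_sum[symmetric])
        (auto intro: P.finite_measure_axioms sets_count_space_event[OF meas_mv])
    also have "\<dots> = pi0" using move_stay[of T "x h"] by simp
    finally show "(\<Sum>f\<in>{f. f (x h) = x h}. ?P (mv T) f * ?P (history T) h) = pi0 * ?P (history T) h"
      by (simp add: sum_distrib_right[symmetric])
  qed simp
  also have "\<dots> = pi0 * measure M {\<omega>\<in>space M. history T \<omega> \<in> V}"
    using measure_preimage_finite_sum[OF P.finite_measure_axioms V, of "history T"]
      sets_count_space_event[OF history_measurable] by (simp add: sum_distrib_left)
  finally show ?thesis .
qed

lemma stay_prob_given_count:
  assumes n: "n < k"
  shows "measure M {\<omega>\<in>space M. Ntg \<omega> = k \<and> mv T \<omega> (s T n \<omega>) = s T n \<omega>}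
         = pi0 * measure M {\<omega>\<in>space M. Ntg \<omega> = k}"
proof -
  define V where "V = Pair k ` {xs. set xs \<subseteq> {ys :: 'c list. set ys \<subseteq> UNIV \<and> length ys = k} \<and> length xs = Suc T}"
  define x where "x h = snd h ! T ! n" for h :: "nat \<times> 'c list list"
  have V: "finite V" unfolding V_def by (intro finite_imageI finite_lists_length_eq) auto
  have in_V: "history T \<omega> \<in> V \<longleftrightarrow> Ntg \<omega> = k" for \<omega>
    unfolding history_def V_def by (auto simp: image_iff)
  have x: "Ntg \<omega> = k \<Longrightarrow> x (history T \<omega>) = s T n \<omega>" for \<omega>
    unfolding history_def x_def using n by (simp del: upt_Suc)
  have "{\<omega>\<in>space M. Ntg \<omega> = k \<and> mv T \<omega> (s T n \<omega>) = s T n \<omega>}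
      = {\<omega>\<in>space M. history T \<omega> \<in> V \<and> mv T \<omega> (x (history T \<omega>)) = x (history T \<omega>)}"
    using in_V x by auto
  moreover have "{\<omega>\<in>space M. Ntg \<omega> = k} = {\<omega>\<in>space M. history T \<omega> \<in> V}" using in_V by auto
  ultimately show ?thesis using stay_independent_of_history[OF V] by simp
qed

lemma effort_integral:
  assumes u: "1 \<le> u" and n: "n < k"
  shows "(\<integral>\<omega>. indicator {\<omega>\<in>space M. Ntg \<omega> = k} \<omega> * lam u (s u n \<omega>) \<omega> \<partial>M)
         = expected_gain k u * measure M {\<omega>\<in>space M. Ntg \<omega> = k}"
proof -
  obtain T where uT: "u = Suc T" using u by (cases u) auto
  define A where "A = {\<omega>\<in>space M. Ntg \<omega> = k}"
  define E where "E = {\<omega>\<in>space M. Ntg \<omega> = k \<and> mv T \<omega> (s T n \<omega>) = s T n \<omega>}"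
  define a where "a = stay_effort pi0 g (Lambda / real k) (cb k u)"
  define b where "b = nb_effort pi0 g (Lambda / real k) (cb k u)"
  have A: "A \<in> sets M" unfolding A_def by (rule sets_count_space_event[OF meas_N])
  have "(\<lambda>\<omega>. (Ntg \<omega>, mv T \<omega>, s T n \<omega>)) \<in> measurable M (count_space UNIV)"
    using measurable_count_space_pair[OF meas_N measurable_count_space_pair[OF meas_mv[of T] meas_s[of T n], of Pair], of Pair]
    by simp
  from sets_count_space_event[OF this, of "\<lambda>(m, f, x). m = k \<and> f x = x"]
  have E: "E \<in> sets M" unfolding E_def by simp
  have lam_meas: "(\<lambda>\<omega>. lam u (s u n \<omega>) \<omega>) \<in> borel_measurable M"
    by (rule measurable_compose_countable[OF _ meas_s]) (rule meas_lam)
  have pointwise: "AE \<omega> in M. indicator A \<omega> * lam u (s u n \<omega>) \<omega> = b * indicator A \<omega> + (a - b) * indicator E \<omega>"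
    using AE_moves_local
  proof (rule AE_mp, intro AE_I2 impI)
    fix \<omega> assume "\<omega> \<in> space M" and local: "\<forall>u j. mv u \<omega> j \<in> nbhd G j"
    thus "indicator A \<omega> * lam u (s u n \<omega>) \<omega> = b * indicator A \<omega> + (a - b) * indicator E \<omega>"
      using effort_on_target_cell[OF _ n local, of T] unfolding A_def E_def a_def b_def uT
      by (cases "Ntg \<omega> = k") (auto simp: indicator_def)
  qed
  have "(\<integral>\<omega>. indicator A \<omega> * lam u (s u n \<omega>) \<omega> \<partial>M) = (\<integral>\<omega>. b * indicator A \<omega> + (a - b) * indicator E \<omega> \<partial>M)"
    by (rule integral_cong_AE[OF _ _ pointwise]) (use A E lam_meas in auto)
  also have "\<dots> = b * measure M A + (a - b) * measure M E"
    using A E by (simp add: Int_absorb2 sets.sets_into_space less_top[symmetric])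
  also have "measure M E = pi0 * measure M A" unfolding E_def A_def by (rule stay_prob_given_count[OF n])
  finally show ?thesis unfolding A_def expected_gain_def a_def b_def by (simp add: algebra_simps)
qed

lemma precision_integral:
  assumes n: "n < k" and i_meas: "i \<in> measurable M (count_space UNIV)"
    and i_near: "\<And>\<omega>. \<omega> \<in> space M \<Longrightarrow> Ntg \<omega> = k \<Longrightarrow> i \<omega> \<in> nbhd G (s t' n \<omega>)"
  defines "A \<equiv> {\<omega>\<in>space M. Ntg \<omega> = k}"
  shows "(\<integral>\<omega>. indicator A \<omega> * c (Suc t') (i \<omega>) \<omega> \<partial>M)
         = c1 * measure M A + (\<Sum>u\<in>{1..<Suc t'}. (\<integral>\<omega>. indicator A \<omega> * lam u (s u n \<omega>) \<omega> \<partial>M))"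
proof -
  let ?lamA = "\<lambda>u \<omega>. indicator A \<omega> * lam u (s u n \<omega>) \<omega>"
  have A: "A \<in> sets M" unfolding A_def by (rule sets_count_space_event[OF meas_N])
  have c_meas: "(\<lambda>\<omega>. c (Suc t') (i \<omega>) \<omega>) \<in> borel_measurable M"
    by (rule measurable_compose_countable[OF _ i_meas]) (rule meas_c)
  have lam_meas: "(\<lambda>\<omega>. lam u (s u n \<omega>) \<omega>) \<in> borel_measurable M" for u
    by (rule measurable_compose_countable[OF _ meas_s]) (rule meas_lam)
  have pointwise: "AE \<omega> in M. indicator A \<omega> * c (Suc t') (i \<omega>) \<omega> = c1 * indicator A \<omega> + (\<Sum>u\<in>{1..<Suc t'}. ?lamA u \<omega>)"
    using AE_moves_local
  proof (rule AE_mp, intro AE_I2 impI)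
    fix \<omega> assume "\<omega> \<in> space M" and local: "\<forall>u j. mv u \<omega> j \<in> nbhd G j"
    thus "indicator A \<omega> * c (Suc t') (i \<omega>) \<omega> = c1 * indicator A \<omega> + (\<Sum>u\<in>{1..<Suc t'}. ?lamA u \<omega>)"
      using precision_along_path[OF _ n local i_near] unfolding A_def
      by (cases "Ntg \<omega> = k") (auto simp: indicator_def)
  qed
  have lam_int: "integrable M (?lamA u)" if "u \<in> {1..<Suc t'}" for u
  proof (rule P.integrable_const_bound[where B=Lambda])
    show "AE \<omega> in M. norm (?lamA u \<omega>) \<le> Lambda"
      using effort_bounds[of u] that Lambda by (intro AE_I2) (auto simp: indicator_def)
  qed (use A lam_meas in simp)
  have sum_int: "integrable M (\<lambda>\<omega>. \<Sum>u\<in>{1..<Suc t'}. ?lamA u \<omega>)"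
    by (rule Bochner_Integration.integrable_sum) (rule lam_int)
  have "(\<integral>\<omega>. indicator A \<omega> * c (Suc t') (i \<omega>) \<omega> \<partial>M)
      = (\<integral>\<omega>. c1 * indicator A \<omega> + (\<Sum>u\<in>{1..<Suc t'}. ?lamA u \<omega>) \<partial>M)"
    by (rule integral_cong_AE[OF _ _ pointwise]) (use A c_meas lam_meas in auto)
  also have "\<dots> = (\<integral>\<omega>. c1 * indicator A \<omega> \<partial>M) + (\<integral>\<omega>. (\<Sum>u\<in>{1..<Suc t'}. ?lamA u \<omega>) \<partial>M)"
    using A sum_int by (intro Bochner_Integration.integral_add) (auto simp: less_top[symmetric])
  also have "\<dots> = c1 * measure M A + (\<Sum>u\<in>{1..<Suc t'}. (\<integral>\<omega>. ?lamA u \<omega> \<partial>M))"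
    using A Bochner_Integration.integral_sum[where I="{1..<Suc t'}" and f="?lamA"] lam_int
    by (simp add: Int_absorb2 sets.sets_into_space less_top[symmetric])
  finally show ?thesis .
qed

theorem cond_exp_precision_eq_cbar:
  assumes t: "1 \<le> t" and pos: "measure M {\<omega>\<in>space M. card (Psi 1 \<omega>) = k} > 0" and n: "n < k"
    and i_meas: "i \<in> measurable M (count_space UNIV)"
    and i_near: "\<forall>\<omega>\<in>space M. card (Psi 1 \<omega>) = k \<longrightarrow> i \<omega> \<in> nbhd G (s (t - 1) n \<omega>)"
  shows "cond_exp_event M {\<omega>\<in>space M. card (Psi 1 \<omega>) = k} (\<lambda>\<omega>. c t (i \<omega>) \<omega>) = cb k t"
proof -
  obtain t' where t': "t = Suc t'" using t by (cases t) auto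
  define A where "A = {\<omega>\<in>space M. Ntg \<omega> = k}"
  have event: "{\<omega>\<in>space M. card (Psi 1 \<omega>) = k} = A" unfolding A_def card_Psi ..
  have "(\<integral>\<omega>. indicator A \<omega> * c t (i \<omega>) \<omega> \<partial>M)
      = c1 * measure M A + (\<Sum>u\<in>{1..<Suc t'}. expected_gain k u * measure M A)"
    using precision_integral[OF n i_meas, of t'] effort_integral[OF _ n] i_near
    unfolding A_def t' by (simp add: card_Psi)
  also have "\<dots> = cb k t * measure M A"
    using cbar_telescope[of k t'] n unfolding t' by (simp add: sum_distrib_right[symmetric] distrib_right)
  finally show ?thesis using pos unfolding cond_exp_event_def event by simp
qed

end


text \<open>The theorem is the locale result for c1 = sigma^2/sigma0^2; with Delta^2 = 0 the
  precision update 1/c' = 1/(c + lam) + Delta^2/sigma^2 reads c' = c + lam.\<close>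
theorem lemma1:
  fixes M :: "'w measure"
    and G :: "'c::finite \<Rightarrow> 'c set" and g :: nat
    and pi0 sigma sigma0 Delta Lambda :: real
    and Ntg :: "'w \<Rightarrow> nat"
    and s :: "nat \<Rightarrow> nat \<Rightarrow> 'w \<Rightarrow> 'c"
    and mv :: "nat \<Rightarrow> 'w \<Rightarrow> 'c \<Rightarrow> 'c"
    and c lam :: "nat \<Rightarrow> 'c \<Rightarrow> 'w \<Rightarrow> real"
    and Psi :: "nat \<Rightarrow> 'w \<Rightarrow> 'c set"
  assumes M: "prob_space M"
    and G_card: "\<And>j. card (G j) = g" and g_pos: "0 < g" and G_irrefl: "\<And>j. j \<notin> G j"
    and sig: "0 < sigma" "0 < sigma0"
    and Delta0: "Delta\<^sup>2 = 0"
    and Lambda: "0 \<le> Lambda"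
    and pi0: "pi0 < 1" "pi0 \<ge> (1 - pi0) / real g"
    and Psi_def: "\<And>t \<omega>. Psi t \<omega> = (\<lambda>n. s t n \<omega>) ` {..<Ntg \<omega>}"
    and disj: "\<And>t \<omega> n n'. n < Ntg \<omega> \<Longrightarrow> n' < Ntg \<omega> \<Longrightarrow> n \<noteq> n' \<Longrightarrow>
                 nbhd G (s t n \<omega>) \<inter> nbhd G (s t n' \<omega>) = {}"
    and move: "\<And>t n \<omega>. s (Suc t) n \<omega> = mv t \<omega> (s t n \<omega>)"
    and meas_N: "Ntg \<in> measurable M (count_space UNIV)"
    and meas_s: "\<And>t n. s t n \<in> measurable M (count_space UNIV)"
    and meas_mv: "\<And>t. mv t \<in> measurable M (count_space UNIV)"
    and meas_c: "\<And>t i. c t i \<in> borel_measurable M"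
    and meas_lam: "\<And>t i. lam t i \<in> borel_measurable M"
    and move_stay: "\<And>t j. measure M {\<omega> \<in> space M. mv t \<omega> j = j} = pi0"
    and move_nb: "\<And>t j k. k \<in> G j \<Longrightarrow> measure M {\<omega> \<in> space M. mv t \<omega> j = k} = (1 - pi0) / real g"
    and move_indep_cells: "\<And>t. prob_space.indep_vars M (\<lambda>_. count_space UNIV) (\<lambda>j \<omega>. mv t \<omega> j) UNIV"
    and move_indep_past: "\<And>t f h. measure M {\<omega> \<in> space M. mv t \<omega> = f \<and>
              (Ntg \<omega>, map (\<lambda>k. map (\<lambda>n. s k n \<omega>) [0..<Ntg \<omega>]) [0..<Suc t]) = h}
          = measure M {\<omega> \<in> space M. mv t \<omega> = f}
            * measure M {\<omega> \<in> space M.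
                (Ntg \<omega>, map (\<lambda>k. map (\<lambda>n. s k n \<omega>) [0..<Ntg \<omega>]) [0..<Suc t]) = h}"
    and c_init: "\<And>i \<omega>. c 1 i \<omega> = sigma\<^sup>2 / sigma0\<^sup>2"
    and c_update: "\<And>t n \<omega> i. 1 \<le> t \<Longrightarrow> n < Ntg \<omega> \<Longrightarrow> i \<in> nbhd G (s t n \<omega>) \<Longrightarrow>
            1 / c (Suc t) i \<omega> = 1 / (c t (s t n \<omega>) \<omega> + lam t (s t n \<omega>) \<omega>) + Delta\<^sup>2 / sigma\<^sup>2"
    and policy_U: "\<And>t \<omega>. 1 \<le> t \<Longrightarrow>
            is_arg_min
              (alloc_obj (semi_p pi0 g G (Psi (t - 1) \<omega>))
                 (\<lambda>i. if i \<in> nbhd_set G (Psi (t - 1) \<omega>)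
                      then cbar (sigma\<^sup>2 / sigma0\<^sup>2) pi0 g Lambda (card (Psi 1 \<omega>)) t
                      else c t i \<omega>))
              (feasible_alloc Lambda) (\<lambda>i. lam t i \<omega>)"
  shows "\<forall>t\<ge>1. \<forall>k. measure M {\<omega> \<in> space M. card (Psi 1 \<omega>) = k} > 0 \<longrightarrow>
           (\<forall>n<k. \<forall>i :: 'w \<Rightarrow> 'c.
              i \<in> measurable M (count_space UNIV) \<and>
              (\<forall>\<omega>\<in>space M. card (Psi 1 \<omega>) = k \<longrightarrow> i \<omega> \<in> nbhd G (s (t - 1) n \<omega>)) \<longrightarrow>
              cond_exp_event M {\<omega> \<in> space M. card (Psi 1 \<omega>) = k} (\<lambda>\<omega>. c t (i \<omega>) \<omega>)
                \<le> cbar (sigma\<^sup>2 / sigma0\<^sup>2) pi0 g Lambda k t)"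
proof -
  have c_update_additive: "c (Suc t) i \<omega> = c t (s t n \<omega>) \<omega> + lam t (s t n \<omega>) \<omega>"
    if "1 \<le> t" "n < Ntg \<omega>" "i \<in> nbhd G (s t n \<omega>)" for t n \<omega> i
    using c_update[OF that] Delta0 by (simp add: inverse_eq_divide[symmetric])
  have c1_pos: "0 < sigma\<^sup>2 / sigma0\<^sup>2" using sig by simp
  interpret search_model M G g pi0 Lambda "sigma\<^sup>2 / sigma0\<^sup>2" Ntg s mv c lam Psi
    by (rule search_model.intro) (fact assms c_update_additive c1_pos)+
  show ?thesis using cond_exp_precision_eq_cbar by (intro allI impI, elim conjE) simp
qed

end
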